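(* For positive integers $n$ and $i$ with $n\ge(2i)^{100}$, $$F(n,i)\le\frac{i^{2n+i}}{n^{(i-1)/2}}.$$
   Context: For positive integers $m,i$, $F(m,i):=\sum_{v_1,\dots,v_i\in\mathbb Z_{\ge0},\ v_1+\cdots+v_i=m}\binom{m}{v_1,\dots,v_i}^2$, where $\binom{m}{v_1,\dots,v_i}=\frac{m!}{v_1!\cdots v_i!}$ is the multinomial coefficient. *)

theory Defs
  imports "HOL-Analysis.Analysis"
begin

definition multinom :: "nat \<Rightarrow> nat \<Rightarrow> (nat \<Rightarrow> nat) \<Rightarrow> nat" where
  "multinom m i v = fact m div (\<Prod>j<i. fact (v j))"

definition tuples :: "nat \<Rightarrow> nat \<Rightarrow> (nat \<Rightarrow> nat) set" where
  "tuples m i = {v. (\<forall>j. i \<le> j \<longrightarrow> v j = 0) \<and> (\<Sum>j<i. v j) = m}"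

definition F :: "nat \<Rightarrow> nat \<Rightarrow> nat" where
  "F m i = (\<Sum>v\<in>tuples m i. (multinom m i v)^2)"

end

theory Submission
  imports Defs
begin

text \<open>
  Bounding each square by the largest multinomial coefficient M gives
  F(n,i) \<le> M \<cdot> i^n. Moving one unit from a part to a part smaller by at least two
  increases a multinomial coefficient, so M is attained at a balanced tuple, all of
  whose parts w_j are at least n/i - 1 and positive. For it, the Stirling bounds
  e^(5/6) \<le> k! e^k / (k^k \<surd>k) \<le> e together with Gibbs' inequality
  n^n \<le> i^n \<Prod> w_j^w_j give M \<le> e \<surd>n i^n / (e^(5i/6) \<Prod> \<surd>w_j), and n \<le> i^2 w_j
  turns this into M n^((i-1)/2) \<le> i^(n+i).
\<close>

section \<open>Stirling bounds for the factorial\<close>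

lemma ln_add_one_ge:
  fixes x :: real assumes "x \<ge> 0" shows "2 * x / (2 + x) \<le> ln (1 + x)"
proof -
  let ?g = "\<lambda>t::real. ln (1 + t) - 2 * t / (2 + t)"
  have "?g 0 \<le> ?g x"
  proof (rule deriv_nonneg_imp_mono[where g = ?g and a = 0 and b = x
      and g' = "\<lambda>t. 1 / (1 + t) - 4 / (2 + t)^2"])
    fix t assume "t \<in> {0..x}"
    then have t0: "t \<ge> 0" by auto
    show "(?g has_real_derivative 1 / (1 + t) - 4 / (2 + t)^2) (at t)"
      using t0 by (auto intro!: derivative_eq_intros simp: power2_eq_square)
    have "4 * (1 + t) \<le> (2 + t)^2" by (simp add: power2_eq_square algebra_simps)
    then show "1 / (1 + t) - 4 / (2 + t)^2 \<ge> 0" using t0 by (simp add: field_simps)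
  qed (use assms in auto)
  then show ?thesis by simp
qed

lemma ln_add_one_le:
  fixes x :: real assumes "x \<ge> 0" shows "ln (1 + x) \<le> x * (6 + x) / (6 + 4 * x)"
proof -
  let ?g = "\<lambda>t::real. t * (6 + t) / (6 + 4 * t) - ln (1 + t)"
  have "?g 0 \<le> ?g x"
  proof (rule deriv_nonneg_imp_mono[where g = ?g and a = 0 and b = x
      and g' = "\<lambda>t. (36 + 12*t + 4*t^2) / (6 + 4*t)^2 - 1 / (1 + t)"])
    fix t assume "t \<in> {0..x}"
    then have t0: "t \<ge> 0" by auto
    show "(?g has_real_derivative (36 + 12*t + 4*t^2) / (6 + 4*t)^2 - 1 / (1 + t)) (at t)"
      using t0 by (auto intro!: derivative_eq_intros simp: power2_eq_square algebra_simps)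
    have "(6 + 4*t)^2 \<le> (1 + t) * (36 + 12*t + 4*t^2)"
      using t0 by (simp add: power2_eq_square algebra_simps)
    then show "(36 + 12*t + 4*t^2) / (6 + 4*t)^2 - 1 / (1 + t) \<ge> 0"
      using t0 by (simp add: field_simps)
  qed (use assms in auto)
  then show ?thesis by simp
qed

text \<open>The error term in ln k! = (k + 1/2) ln k - k + stirling_rem k; it decreases
  to ln \<surd>(2\<pi>), but only the bounds 5/6 \<le> stirling_rem k \<le> 1 are needed.\<close>
definition stirling_rem :: "nat \<Rightarrow> real" where
  "stirling_rem k = ln (fact k) - (real k + 1/2) * ln (real k) + real k"

lemma stirling_rem_diff:
  assumes "k \<ge> 1"
  shows "stirling_rem k - stirling_rem (Suc k) = (real k + 1/2) * ln (1 + 1 / real k) - 1"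
proof -
  have k0: "real k > 0" using assms by simp
  have "ln (fact (Suc k) :: real) = ln ((1 + real k) * fact k)" by simp
  also have "\<dots> = ln (1 + real k) + ln (fact k)" by (rule ln_mult_pos) auto
  finally have fact_Suc: "ln (fact (Suc k) :: real) = ln (1 + real k) + ln (fact k)" .
  have "1 + 1 / real k = (1 + real k) / real k" using k0 by (simp add: field_simps)
  then have ln_quot: "ln (1 + 1 / real k) = ln (1 + real k) - ln (real k)"
    using k0 by (simp add: ln_div)
  show ?thesis unfolding stirling_rem_def fact_Suc ln_quot by (simp add: algebra_simps)
qed

lemma stirling_rem_Suc_le:
  assumes "k \<ge> 1" shows "stirling_rem (Suc k) \<le> stirling_rem k"
proof -
  have k0: "real k > 0" using assms by simp
  have "2 * (1 / real k) / (2 + 1 / real k) \<le> ln (1 + 1 / real k)" by (rule ln_add_one_ge) simp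
  moreover have "2 * (1 / real k) / (2 + 1 / real k) = 2 / (2 * real k + 1)"
    using k0 by (simp add: field_simps)
  ultimately have "1 \<le> (real k + 1/2) * ln (1 + 1 / real k)"
    using k0 by (simp add: field_simps)
  then show ?thesis using stirling_rem_diff[OF assms] by simp
qed

lemma stirling_rem_diff_le:
  assumes "k \<ge> 1" shows "stirling_rem k - stirling_rem (Suc k) \<le> 1 / (12 * (real k)^2)"
proof -
  define x where "x = 1 / real k"
  have x0: "x > 0" using assms by (simp add: x_def)
  have k: "real k + 1/2 = (2 + x) / (2 * x)" using assms by (simp add: x_def field_simps)
  have "(real k + 1/2) * ln (1 + x) \<le> (2 + x) / (2 * x) * (x * (6 + x) / (6 + 4 * x))"
    unfolding k using x0 by (intro mult_left_mono ln_add_one_le) auto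
  also have "\<dots> = (2 + x) * (6 + x) / (2 * (6 + 4 * x))"
  proof -
    have "0 < x * 12 + x * (x * 8)" using x0 by (intro add_pos_pos) auto
    then show ?thesis using x0 by (simp add: field_simps)
  qed
  also have "\<dots> \<le> 1 + x^2 / 12"
    using x0 by (simp add: field_simps power2_eq_square)
  finally show ?thesis
    using stirling_rem_diff[OF assms] by (simp add: x_def power2_eq_square)
qed

lemma stirling_rem_le_one: "k \<ge> 1 \<Longrightarrow> stirling_rem k \<le> 1"
proof (induction k rule: nat_induct_at_least)
  case base then show ?case by (simp add: stirling_rem_def)
next
  case (Suc k) then show ?case using stirling_rem_Suc_le[of k] by simp
qed

text \<open>The bound 5/6 + 1/(6(2k - 1)) drops by at least 1/(12k^2) per step, at least as much
  as stirling_rem does by stirling_rem_diff_le, so the induction goes through.\<close>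
lemma stirling_rem_ge_strong: "k \<ge> 1 \<Longrightarrow> 5/6 + 1 / (6 * (2 * real k - 1)) \<le> stirling_rem k"
proof (induction k rule: nat_induct_at_least)
  case base then show ?case by (simp add: stirling_rem_def)
next
  case (Suc k)
  have k1: "real k \<ge> 1" using Suc by simp
  have kk: "real k * real k \<ge> 1" using k1 mult_mono[of 1 "real k" 1 "real k"] by simp
  have "1 / (6 * (2 * real k - 1)) - 1 / (6 * (2 * real (Suc k) - 1))
        = 2 / (6 * ((2 * real k - 1) * (2 * real k + 1)))"
    using k1 kk by (simp add: field_simps)
  also have "\<dots> \<ge> 1 / (12 * (real k)^2)"
    using k1 kk by (simp add: divide_simps power2_eq_square ring_distribs)
  finally show ?case using Suc stirling_rem_diff_le[of k] by simp
qed

lemma stirling_rem_ge: "k \<ge> 1 \<Longrightarrow> 5/6 \<le> stirling_rem k"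
proof -
  assume "k \<ge> 1"
  then have "0 \<le> 1 / (6 * (2 * real k - 1))" by simp
  with stirling_rem_ge_strong[OF \<open>k \<ge> 1\<close>] show ?thesis by linarith
qed

lemma fact_eq_stirling_rem:
  assumes "k \<ge> 1"
  shows "fact k = exp (stirling_rem k) * sqrt (real k) * real k ^ k / exp (real k)"
proof -
  have k0: "real k > 0" using assms by simp
  have "exp ((real k + 1/2) * ln (real k)) = exp (real k * ln (real k)) * exp (ln (real k) / 2)"
    by (simp add: algebra_simps exp_add[symmetric])
  also have "\<dots> = real k ^ k * sqrt (real k)"
    using k0 by (simp add: exp_of_nat_mult powr_half_sqrt[symmetric] powr_def)
  finally have "exp ((real k + 1/2) * ln (real k)) = real k ^ k * sqrt (real k)" .
  moreover have "(fact k :: real) = exp (stirling_rem k + (real k + 1/2) * ln (real k) - real k)"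
    by (simp add: stirling_rem_def)
  ultimately show ?thesis by (simp add: exp_add exp_diff)
qed

lemma fact_le_stirling:
  assumes "k \<ge> 1" shows "fact k \<le> exp 1 * sqrt (real k) * real k ^ k / exp (real k)"
  unfolding fact_eq_stirling_rem[OF assms] using stirling_rem_le_one[OF assms]
  by (intro divide_right_mono mult_right_mono) auto

lemma stirling_le_fact:
  assumes "k \<ge> 1" shows "exp (5/6) * sqrt (real k) * real k ^ k / exp (real k) \<le> fact k"
  unfolding fact_eq_stirling_rem[OF assms] using stirling_rem_ge[OF assms]
  by (intro divide_right_mono mult_right_mono) auto

section \<open>Multinomial coefficients\<close>

lemma tuples_Suc_iff: "v \<in> tuples m (Suc i) \<longleftrightarrow> v i \<le> m \<and> v(i := 0) \<in> tuples (m - v i) i"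
proof -
  have "(\<Sum>j<i. (v(i := 0)) j) = (\<Sum>j<i. v j)" by (rule sum.cong) auto
  moreover have "(\<forall>j. Suc i \<le> j \<longrightarrow> v j = 0) \<longleftrightarrow> (\<forall>j. i \<le> j \<longrightarrow> (v(i := 0)) j = 0)"
    by (auto simp: Suc_le_eq)
  ultimately show ?thesis unfolding tuples_def by auto
qed

lemma tuples_0: "tuples m 0 = (if m = 0 then {\<lambda>_. 0} else {})"
  by (auto simp: tuples_def)

lemma tuples_Suc_eq_image:
  "tuples m (Suc i) = (\<lambda>(k, u). u(i := k)) ` (SIGMA k:{..m}. tuples (m - k) i)"
proof (intro equalityI subsetI)
  fix v assume "v \<in> tuples m (Suc i)"
  then have "v i \<le> m" "v(i := 0) \<in> tuples (m - v i) i" by (auto simp: tuples_Suc_iff)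
  then show "v \<in> (\<lambda>(k, u). u(i := k)) ` (SIGMA k:{..m}. tuples (m - k) i)"
    by (intro image_eqI[of _ _ "(v i, v(i := 0))"]) auto
next
  fix v assume "v \<in> (\<lambda>(k, u). u(i := k)) ` (SIGMA k:{..m}. tuples (m - k) i)"
  then obtain k u where "k \<le> m" "u \<in> tuples (m - k) i" "v = u(i := k)" by auto
  moreover from this have "(u(i := k))(i := 0) = u" by (auto simp: tuples_def)
  ultimately show "v \<in> tuples m (Suc i)" by (simp add: tuples_Suc_iff)
qed

lemma inj_on_tuples_upd: "inj_on (\<lambda>(k, u). u(i := k)) (SIGMA k:{..m}. tuples (m - k) i)"
proof (rule inj_onI, clarify)
  fix k u k' u'
  assume "u \<in> tuples (m - k) i" "u' \<in> tuples (m - k') i" and e: "u(i := k) = u'(i := k')"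
  then have "u i = 0" "u' i = 0" by (simp_all add: tuples_def)
  with e show "k = k' \<and> u = u'" by (metis fun_upd_same fun_upd_triv fun_upd_upd)
qed

lemma finite_tuples: "finite (tuples m i)"
  by (induction i arbitrary: m) (simp_all add: tuples_0 tuples_Suc_eq_image)

lemma prod_fact_dvd_fact: "v \<in> tuples m i \<Longrightarrow> (\<Prod>j<i. fact (v j)) dvd (fact m :: nat)"
proof (induction i arbitrary: m v)
  case 0 then show ?case by simp
next
  case (Suc i)
  then have vi: "v i \<le> m" and "v(i := 0) \<in> tuples (m - v i) i" by (auto simp: tuples_Suc_iff)
  from Suc.IH[OF this(2)] have "(\<Prod>j<i. fact (v j)) dvd (fact (m - v i) :: nat)" by simp
  then have "(\<Prod>j<i. fact (v j)) * fact (v i) dvd (fact (m - v i) * fact (v i) :: nat)"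
    by (rule mult_dvd_mono) simp
  also have "\<dots> dvd fact m" using fact_fact_dvd_fact[of "m - v i" "v i"] vi by simp
  finally show ?case by simp
qed

lemma of_nat_multinom: "v \<in> tuples m i \<Longrightarrow> real (multinom m i v) = fact m / (\<Prod>j<i. fact (v j))"
  unfolding multinom_def by (simp add: real_of_nat_div prod_fact_dvd_fact)

lemma multinom_Suc_upd:
  assumes "k \<le> m" and u: "u \<in> tuples (m - k) i"
  shows "multinom m (Suc i) (u(i := k)) = (m choose k) * multinom (m - k) i u"
proof -
  have "u(i := k) \<in> tuples m (Suc i)" using assms unfolding tuples_Suc_eq_image by auto
  moreover have "(\<Prod>j<i. fact ((u(i := k)) j)) = (\<Prod>j<i. fact (u j) :: real)"
    by (rule prod.cong) auto
  ultimately have "real (multinom m (Suc i) (u(i := k))) = fact m / ((\<Prod>j<i. fact (u j)) * fact k)"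
    by (simp add: of_nat_multinom)
  also have "\<dots> = real (m choose k) * real (multinom (m - k) i u)"
    using assms by (simp add: of_nat_multinom binomial_fact field_simps)
  finally show ?thesis by (simp flip: of_nat_mult)
qed

lemma sum_multinom: "(\<Sum>v\<in>tuples m i. multinom m i v) = i ^ m"
proof (induction i arbitrary: m)
  case 0 then show ?case by (simp add: tuples_0 multinom_def)
next
  case (Suc i)
  have "(\<Sum>v\<in>tuples m (Suc i). multinom m (Suc i) v)
      = (\<Sum>k\<le>m. \<Sum>u\<in>tuples (m - k) i. multinom m (Suc i) (u(i := k)))"
    unfolding tuples_Suc_eq_image
    by (subst sum.reindex[OF inj_on_tuples_upd]) (simp add: sum.Sigma finite_tuples case_prod_unfold)
  also have "\<dots> = (\<Sum>k\<le>m. (m choose k) * i ^ (m - k))"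
    by (simp add: multinom_Suc_upd sum_distrib_left[symmetric] Suc.IH)
  also have "\<dots> = Suc i ^ m"
    using binomial_ring[of 1 i m] by simp
  finally show ?case .
qed

lemma multinom_le_power: "v \<in> tuples m i \<Longrightarrow> multinom m i v \<le> i ^ m"
  using member_le_sum[OF _ _ finite_tuples, of v m i "multinom m i"] by (simp add: sum_multinom)

lemma F_le_max_multinom:
  assumes "\<And>v. v \<in> tuples m i \<Longrightarrow> multinom m i v \<le> M"
  shows "F m i \<le> M * i ^ m"
proof -
  have "F m i \<le> (\<Sum>v\<in>tuples m i. M * multinom m i v)"
    unfolding F_def power2_eq_square using assms by (intro sum_mono mult_right_mono) auto
  then show ?thesis by (simp add: sum_distrib_left[symmetric] sum_multinom)
qed

section \<open>Maximal multinomial coefficients\<close>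

lemma prod_fact_move_unit:
  assumes "finite A" "a \<in> A" "b \<in> A" "a \<noteq> b" "w a > 0"
  shows "(\<Prod>j\<in>A. fact ((w(a := w a - 1, b := w b + 1)) j)) * w a
       = (\<Prod>j\<in>A. fact (w j)) * (w b + 1 :: nat)"
proof -
  let ?w' = "w(a := w a - 1, b := w b + 1)"
  have split: "(\<Prod>j\<in>A. f j) = f a * f b * (\<Prod>j\<in>A - {a} - {b}. f j)" for f :: "_ \<Rightarrow> nat"
    using assms by (simp add: prod.remove[of A a] prod.remove[of "A - {a}" b] mult.assoc)
  let ?R = "\<Prod>j\<in>A - {a} - {b}. fact (w j) :: nat"
  have "(\<Prod>j\<in>A - {a} - {b}. fact (?w' j)) = ?R"
    by (rule prod.cong) auto
  then have "(\<Prod>j\<in>A. fact (?w' j)) = fact (w a - 1) * fact (Suc (w b)) * ?R"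
    unfolding split[of "\<lambda>j. fact (?w' j)"] using \<open>a \<noteq> b\<close> by simp
  also have "\<dots> = fact (w a - 1) * (Suc (w b) * fact (w b)) * ?R"
    by (simp only: fact_Suc of_nat_id)
  finally have "(\<Prod>j\<in>A. fact (?w' j)) * w a = (fact (w a - 1) * w a) * fact (w b) * ?R * Suc (w b)"
    by (simp only: mult_ac)
  also have "fact (w a - 1) * w a = fact (w a)"
    using \<open>w a > 0\<close> by (cases "w a") (simp_all add: mult.commute)
  finally show ?thesis using split[of "\<lambda>j. fact (w j)"] by (simp only: Suc_eq_plus1)
qed

lemma tuples_move_unit:
  assumes w: "w \<in> tuples n i" and "a < i" "b < i" "a \<noteq> b" "w a > 0"
  shows "w(a := w a - 1, b := w b + 1) \<in> tuples n i"
proof -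
  let ?w' = "w(a := w a - 1, b := w b + 1)"
  have split: "sum f {..<i} = f a + f b + sum f ({..<i} - {a} - {b})" for f :: "nat \<Rightarrow> nat"
    using assms by (simp add: sum.remove[of _ a] sum.remove[of _ b] add.assoc)
  have "sum ?w' ({..<i} - {a} - {b}) = sum w ({..<i} - {a} - {b})"
    by (rule sum.cong) auto
  then have "sum ?w' {..<i} = sum w {..<i}"
    unfolding split[of ?w'] split[of w] using assms by simp
  then show ?thesis using assms by (simp add: tuples_def)
qed

lemma multinom_max_balanced:
  assumes w: "w \<in> tuples n i" and max: "\<And>v. v \<in> tuples n i \<Longrightarrow> multinom n i v \<le> multinom n i w"
    and "a < i" "b < i"
  shows "w a \<le> w b + 1"
proof (rule ccontr)
  assume "\<not> w a \<le> w b + 1"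
  then have gt: "w b + 1 < w a" and "a \<noteq> b" by auto
  define w' where "w' = w(a := w a - 1, b := w b + 1)"
  have w': "w' \<in> tuples n i"
    unfolding w'_def using assms \<open>a \<noteq> b\<close> gt by (intro tuples_move_unit) auto
  let ?P = "\<Prod>j<i. fact (w j) :: nat" and ?P' = "\<Prod>j<i. fact (w' j) :: nat"
  have "?P' * w a = ?P * (w b + 1)"
    unfolding w'_def using assms \<open>a \<noteq> b\<close> gt by (intro prod_fact_move_unit) auto
  also have "\<dots> < ?P * w a" by (rule mult_less_mono2[OF gt]) (simp add: prod_pos)
  finally have "real ?P' < real ?P" by (simp only: of_nat_less_iff mult_less_cancel2)
  then have "real (multinom n i w) < real (multinom n i w')"
    unfolding of_nat_multinom[OF w] of_nat_multinom[OF w']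
    by (intro divide_strict_left_mono) (auto simp: prod_pos)
  with max[OF w'] show False by simp
qed

lemma balanced_part_bounds:
  assumes "w \<in> tuples n i" and bal: "\<And>a b. a < i \<Longrightarrow> b < i \<Longrightarrow> w a \<le> w b + 1"
    and "1 < i" "i < n" "b < i"
  shows "0 < w b" and "n \<le> i * (i * w b)"
proof -
  have "n = (\<Sum>j<i. w j)" using assms(1) by (simp add: tuples_def)
  also have "\<dots> \<le> (\<Sum>j<i. w b + 1)" by (rule sum_mono) (use bal \<open>b < i\<close> in auto)
  finally have n: "n \<le> i * (w b + 1)" by simp
  then show "0 < w b" using \<open>i < n\<close> by (cases "w b") auto
  moreover have "2 * w b \<le> i * w b" using \<open>1 < i\<close> by simp
  ultimately have "w b + 1 \<le> i * w b" by linarith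
  with n show "n \<le> i * (i * w b)" using le_trans mult_le_mono2 by blast
qed

lemma power_le_card_power_prod_self_power:
  assumes A: "finite A" "A \<noteq> {}" and w: "\<And>j. j \<in> A \<Longrightarrow> w j > 0"
    and n: "(\<Sum>j\<in>A. w j) = n"
  shows "real n ^ n \<le> real (card A) ^ n * (\<Prod>j\<in>A. real (w j) ^ w j)"
proof -
  let ?N = "real n" and ?I = "real (card A)"
  have I0: "?I > 0" using A by (simp add: card_gt_0_iff)
  obtain a where "a \<in> A" using A by blast
  then have "w a \<le> n" using A(1) n by (metis member_le_sum zero_le)
  then have N0: "?N > 0" using w[OF \<open>a \<in> A\<close>] by simp
  have sN: "(\<Sum>j\<in>A. real (w j)) = ?N" using n by (simp flip: of_nat_sum)
  have term_le: "real (w j) * (ln ?N - ln ?I - ln (real (w j))) \<le> ?N / ?I - real (w j)"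
    if j: "j \<in> A" for j
  proof -
    have wj: "real (w j) > 0" using w[OF j] by simp
    have "ln (?N / (?I * real (w j))) \<le> ?N / (?I * real (w j)) - 1"
      using N0 I0 wj by (intro ln_le_minus_one) simp
    then have "ln ?N - ln ?I - ln (real (w j)) \<le> ?N / (?I * real (w j)) - 1"
      using N0 I0 wj by (simp add: ln_div ln_mult_pos)
    from mult_left_mono[OF this, of "real (w j)"] show ?thesis
      using wj by (simp add: field_simps)
  qed
  have "(\<Sum>j\<in>A. real (w j) * (ln ?N - ln ?I - ln (real (w j)))) \<le> (\<Sum>j\<in>A. ?N / ?I - real (w j))"
    by (rule sum_mono) (rule term_le)
  also have "\<dots> = 0" using sN I0 by (simp add: sum_subtractf)
  finally have "?N * ln ?N \<le> ?N * ln ?I + (\<Sum>j\<in>A. real (w j) * ln (real (w j)))"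
    by (simp add: sum_subtractf right_diff_distrib sum_distrib_right[symmetric] sN)
  moreover have "?N ^ n = exp (?N * ln ?N)" using N0 by (simp add: exp_of_nat_mult)
  ultimately have "?N ^ n \<le> exp (?N * ln ?I + (\<Sum>j\<in>A. real (w j) * ln (real (w j))))"
    by simp
  also have "\<dots> = ?I ^ n * (\<Prod>j\<in>A. exp (real (w j) * ln (real (w j))))"
    using I0 A(1) by (simp add: exp_add exp_sum exp_of_nat_mult)
  also have "(\<Prod>j\<in>A. exp (real (w j) * ln (real (w j)))) = (\<Prod>j\<in>A. real (w j) ^ w j)"
    using w by (intro prod.cong) (simp_all add: exp_of_nat_mult)
  finally show ?thesis .
qed

lemma multinom_stirling_bound:
  assumes w: "w \<in> tuples n i" and pos: "\<And>j. j < i \<Longrightarrow> w j > 0" and "i > 0"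
  shows "real (multinom n i w) * (exp (5/6 * real i) * (\<Prod>j<i. sqrt (real (w j))))
       \<le> exp 1 * sqrt (real n) * real i ^ n"
proof -
  let ?W = "\<Prod>j<i. real (w j) ^ w j" and ?Q = "\<Prod>j<i. sqrt (real (w j))"
  have n: "(\<Sum>j<i. w j) = n" using w by (simp add: tuples_def)
  have "w 0 \<le> n" using member_le_sum[of 0 "{..<i}" w] n \<open>i > 0\<close> by simp
  then have "n \<ge> 1" using pos[OF \<open>i > 0\<close>] by simp
  have W0: "?W > 0" using pos by (intro prod_pos) auto
  have exp_n: "exp (real n) = (\<Prod>j<i. exp (real (w j)))"
    by (simp add: exp_sum flip: n)
  have "(\<Prod>j<i. exp (5/6) * sqrt (real (w j)) * real (w j) ^ w j / exp (real (w j)))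
        \<le> (\<Prod>j<i. fact (w j) :: real)"
    using pos by (intro prod_mono) (auto simp: Suc_le_eq intro!: stirling_le_fact)
  then have "exp (5/6 * real i) * ?Q * ?W / exp (real n) \<le> (\<Prod>j<i. fact (w j))"
    by (simp add: exp_n prod.distrib prod_dividef mult.commute flip: exp_of_nat_mult)
  then have "real (multinom n i w) * (exp (5/6 * real i) * ?Q * ?W / exp (real n))
      \<le> real (multinom n i w) * (\<Prod>j<i. fact (w j))"
    by (rule mult_left_mono) simp
  also have "\<dots> = fact n"
    using of_nat_multinom[OF w] by (simp add: prod_pos)
  also have "\<dots> \<le> exp 1 * sqrt (real n) * real n ^ n / exp (real n)"
    using \<open>n \<ge> 1\<close> by (rule fact_le_stirling)
  also have "\<dots> \<le> exp 1 * sqrt (real n) * (real i ^ n * ?W) / exp (real n)"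
    using power_le_card_power_prod_self_power[of "{..<i}" w n] pos n \<open>i > 0\<close>
    by (intro divide_right_mono mult_left_mono) auto
  finally show ?thesis using W0 by (simp add: field_simps)
qed

lemma multinom_balanced_bound:
  assumes w: "w \<in> tuples n i" and bal: "\<And>a b. a < i \<Longrightarrow> b < i \<Longrightarrow> w a \<le> w b + 1"
    and "0 < i" "i < n"
  shows "real (multinom n i w) * sqrt (real n) ^ (i - 1) \<le> real i ^ (n + i)"
proof (cases "i = 1")
  case True
  then show ?thesis using multinom_le_power[OF w] by (simp flip: of_nat_power)
next
  case False
  let ?Q = "\<Prod>j<i. sqrt (real (w j))"
  have "1 < i" using \<open>0 < i\<close> False by simp
  have pos: "0 < w j" and part: "n \<le> i * (i * w j)" if "j < i" for j
    using balanced_part_bounds[OF w _ \<open>1 < i\<close> \<open>i < n\<close> that] bal by blast+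
  have sqrt_n: "sqrt (real n) ^ i \<le> real i ^ i * ?Q"
  proof -
    have "sqrt (real n) \<le> real i * sqrt (real (w j))" if "j < i" for j
    proof -
      have "real n \<le> real i * (real i * real (w j))" using part[OF that] by (simp flip: of_nat_mult)
      then have "sqrt (real n) \<le> sqrt (real i * real i * real (w j))" by (simp add: mult.assoc)
      also have "\<dots> = real i * sqrt (real (w j))" by (simp add: real_sqrt_mult)
      finally show ?thesis .
    qed
    then have "(\<Prod>j<i. sqrt (real n)) \<le> (\<Prod>j<i. real i * sqrt (real (w j)))"
      by (intro prod_mono) auto
    then show ?thesis by (simp add: prod.distrib)
  qed
  have e: "exp 1 \<le> exp (5/6 * real i)" using \<open>1 < i\<close> by simp
  have Q0: "?Q > 0" using pos by (intro prod_pos) auto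
  have "real (multinom n i w) * sqrt (real n) ^ (i - 1) * (exp (5/6 * real i) * ?Q)
      = real (multinom n i w) * (exp (5/6 * real i) * ?Q) * sqrt (real n) ^ (i - 1)" by simp
  also have "\<dots> \<le> exp 1 * sqrt (real n) * real i ^ n * sqrt (real n) ^ (i - 1)"
    using multinom_stirling_bound[OF w pos \<open>0 < i\<close>] by (intro mult_right_mono) auto
  also have "\<dots> = exp 1 * real i ^ n * sqrt (real n) ^ i"
    using \<open>0 < i\<close> by (simp add: power_eq_if)
  also have "\<dots> \<le> exp (5/6 * real i) * real i ^ n * (real i ^ i * ?Q)"
    using e sqrt_n by (intro mult_mono) auto
  finally show ?thesis using Q0 by (simp add: power_add mult_ac)
qed

lemma obtain_multinom_max:
  assumes "i > 0"
  obtains w where "w \<in> tuples n i" and "\<And>v. v \<in> tuples n i \<Longrightarrow> multinom n i v \<le> multinom n i w"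
proof -
  let ?T = "tuples n i" and ?M = "multinom n i"
  have "(\<lambda>j. if j = 0 then n else 0) \<in> ?T" using assms by (simp add: tuples_def)
  then obtain w where "w \<in> ?T" and "?M w = Max (?M ` ?T)"
    using Max_in[of "?M ` ?T"] finite_tuples by (metis empty_iff finite_imageI image_iff)
  with finite_tuples show ?thesis by (intro that) auto
qed

theorem lemmal:
  fixes n i :: nat
  assumes "n > 0" and "i > 0" and "real n \<ge> (2 * real i) ^ 100"
  shows "real (F n i) \<le> real i ^ (2 * n + i) / real n powr ((real i - 1) / 2)"
proof -
  let ?M = "multinom n i"
  have "2 * real i \<le> (2 * real i) ^ 100"
    using assms(2) by (intro power_increasing[of 1 100, simplified]) auto
  then have "i < n" using assms(2,3) by linarith
  obtain w where w: "w \<in> tuples n i" and max: "\<And>v. v \<in> tuples n i \<Longrightarrow> ?M v \<le> ?M w"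
    using obtain_multinom_max[OF assms(2)] by blast
  have "F n i \<le> ?M w * i ^ n" using max by (rule F_le_max_multinom)
  then have "real (F n i) \<le> real (?M w) * real i ^ n"
    by (metis of_nat_le_iff of_nat_mult of_nat_power)
  from mult_right_mono[OF this, of "sqrt (real n) ^ (i - 1)"]
  have "real (F n i) * sqrt (real n) ^ (i - 1) \<le> real (?M w) * sqrt (real n) ^ (i - 1) * real i ^ n"
    by (simp add: mult_ac)
  also have "\<dots> \<le> real i ^ (n + i) * real i ^ n"
    using multinom_balanced_bound[OF w multinom_max_balanced[OF w max] assms(2) \<open>i < n\<close>]
    by (intro mult_right_mono) auto
  also have "\<dots> = real i ^ (2 * n + i)"
    by (simp add: mult_2 add_ac flip: power_add)
  finally have "real (F n i) * sqrt (real n) ^ (i - 1) \<le> real i ^ (2 * n + i)" .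
  moreover have "real n powr ((real i - 1) / 2) = sqrt (real n) ^ (i - 1)"
    using assms(1,2) by (simp add: powr_half_sqrt[symmetric] powr_powr powr_realpow[symmetric])
  ultimately show ?thesis using assms(1) by (simp add: pos_le_divide_eq)
qed

end
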